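(* Let $t \geq 1$ and $N \geq 2t+1$ be integers, and let $G$ be a graph with no isolated vertices, $e(G)=N$, $\Delta(G) = N-t > \frac{N}{2}$, and $e(L(G)) = f(N,N-t)$. Then $f(N,N-t) = \binom{N-t}{2} + \binom{t+2}{2} - 1$, and $G$ is one of the following: (1) the graph $Q(N,t)$: $G$ contains two adjacent vertices $u$ and $v$ with $\deg(u) = N-t$ and $\deg(v) = t+1$, such that all $t$ neighbours of $v$ other than $u$ are also neighbours of $u$ (so $G$ consists of the star centred at $u$ with $N-t$ leaves together with $t$ edges joining $v$ to $t$ other leaves of this star); (2) only when $t=3$, the graph $Q^*(N,3)$: the star centred at a vertex $u$ with $N-3$ leaves together with a triangle on three of these leaves.
   Context: All graphs are finite and simple; $L(G)$ is the line graph of $G$; $e(\cdot)$, $\Delta(\cdot)$, $\delta(\cdot)$ denote number of edges, maximum degree and minimum degree. For integers $N \ge \Delta \ge 1$, $f(N,\Delta) = \max\{ e(L(G)) : e(G)=N, \Delta(G)=\Delta, \delta(G)\geq 1\}$, the maximum over all simple graphs $G$. *)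

theory Defs
  imports Complex_Main
begin

definition simple_graph :: "'a set \<Rightarrow> 'a set set \<Rightarrow> bool" where
  "simple_graph V E \<longleftrightarrow> finite V \<and>
     (\<forall>e\<in>E. \<exists>x y. x \<noteq> y \<and> x \<in> V \<and> y \<in> V \<and> e = {x, y})"

definition degree :: "'a set set \<Rightarrow> 'a \<Rightarrow> nat" where
  "degree E v = card {e \<in> E. v \<in> e}"

definition max_degree :: "'a set \<Rightarrow> 'a set set \<Rightarrow> nat" where
  "max_degree V E = Max (degree E ` V)"

definition min_degree :: "'a set \<Rightarrow> 'a set set \<Rightarrow> nat" where
  "min_degree V E = Min (degree E ` V)"

definition line_graph_edges :: "'a set set \<Rightarrow> nat" where
  "line_graph_edges E = card {{e1, e2} | e1 e2. e1 \<in> E \<and> e2 \<in> E \<and> e1 \<noteq> e2 \<and> e1 \<inter> e2 \<noteq> {}}"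

text \<open>f(N,D): maximum of e(L(G)) over simple graphs with N edges, max degree D and min degree \<ge> 1.
  Every finite graph is isomorphic to one on natural-number vertices, so we range over those.\<close>
definition f_max :: "nat \<Rightarrow> nat \<Rightarrow> nat" where
  "f_max N D = Max {line_graph_edges E | (V :: nat set) E.
      simple_graph V E \<and> card E = N \<and> max_degree V E = D \<and> min_degree V E \<ge> 1}"

end

theory Submission
  imports Defs
begin

text \<open>Fix a vertex \<open>u\<close> of maximum degree \<open>N - t\<close> and let \<open>F\<close> be the \<open>t\<close> edges avoiding \<open>u\<close>.
  Two adjacent edges of \<open>G\<close> either both contain \<open>u\<close> (\<open>binom(N-t,2)\<close> pairs), or both lie in \<open>F\<close>
  (at most \<open>binom(t,2)\<close> pairs, with equality iff \<open>F\<close> is pairwise intersecting), or one lies in \<open>F\<close>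
  and the other joins \<open>u\<close> to one of its two endpoints (at most \<open>2t\<close> pairs, with equality iff every
  edge of \<open>F\<close> lies inside the neighbourhood of \<open>u\<close>). The graph \<open>Q(N,t)\<close> attains this bound, so
  \<open>f(N,N-t) = binom(N-t,2) + binom(t,2) + 2t\<close>, and in an extremal graph \<open>F\<close> is a pairwise
  intersecting family of 2-sets inside the neighbourhood of \<open>u\<close>: either a star centred at some
  \<open>v\<close>, which gives \<open>Q(N,t)\<close>, or a triangle, which forces \<open>t = 3\<close> and gives \<open>Q*(N,3)\<close>.\<close>

lemma card_2_elim_member:
  assumes "card e = 2" "x \<in> e"
  obtains y where "y \<noteq> x" "e = {x, y}"
proof -
  have "card (e - {x}) = 1"
    using assms by simp
  then obtain y where "e - {x} = {y}"
    by (rule card_1_singletonE)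
  with assms(2) that show thesis
    by blast
qed

lemma card_2_eq_doubleton: "card k = 2 \<Longrightarrow> x \<in> k \<Longrightarrow> y \<in> k \<Longrightarrow> x \<noteq> y \<Longrightarrow> k = {x, y}"
  by (auto simp: card_2_iff)

definition neighbours :: "'a set set \<Rightarrow> 'a \<Rightarrow> 'a set" where
  "neighbours E u = {x. {u, x} \<in> E}"

definition adjacent_pairs :: "'a set set \<Rightarrow> 'a set set set" where
  "adjacent_pairs E = {A. A \<subseteq> E \<and> card A = 2 \<and> pairwise (\<lambda>e f. e \<inter> f \<noteq> {}) A}"

lemma adjacent_pairsI:
  assumes "e1 \<in> E" "e2 \<in> E" "e1 \<noteq> e2" "e1 \<inter> e2 \<noteq> {}"
  shows "{e1, e2} \<in> adjacent_pairs E"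
  using assms unfolding adjacent_pairs_def by (simp add: pairwise_insert Int_commute)

lemma adjacent_pairsE:
  assumes "A \<in> adjacent_pairs E"
  obtains e1 e2 where "A = {e1, e2}" "e1 \<in> E" "e2 \<in> E" "e1 \<noteq> e2" "e1 \<inter> e2 \<noteq> {}"
proof -
  from assms have "card A = 2"
    unfolding adjacent_pairs_def by blast
  then obtain e1 e2 where "A = {e1, e2}" "e1 \<noteq> e2"
    unfolding card_2_iff by blast
  with assms that show thesis
    unfolding adjacent_pairs_def by (simp add: pairwise_insert)
qed

lemma line_graph_edges_eq_card_adjacent_pairs: "line_graph_edges E = card (adjacent_pairs E)"
proof -
  have "{{e1, e2} | e1 e2. e1 \<in> E \<and> e2 \<in> E \<and> e1 \<noteq> e2 \<and> e1 \<inter> e2 \<noteq> {}} = adjacent_pairs E"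
  proof (intro equalityI subsetI)
    fix A assume "A \<in> adjacent_pairs E"
    then show "A \<in> {{e1, e2} | e1 e2. e1 \<in> E \<and> e2 \<in> E \<and> e1 \<noteq> e2 \<and> e1 \<inter> e2 \<noteq> {}}"
      by (elim adjacent_pairsE) blast
  qed (auto intro: adjacent_pairsI)
  then show ?thesis
    unfolding line_graph_edges_def by simp
qed

lemma adjacent_pairs_subset_2_subsets: "adjacent_pairs F \<subseteq> {A. A \<subseteq> F \<and> card A = 2}"
  unfolding adjacent_pairs_def by blast

lemma finite_2_subsets: "finite F \<Longrightarrow> finite {A. A \<subseteq> F \<and> card A = 2}"
  by (rule finite_subset[of _ "Pow F"]) auto

lemma card_adjacent_pairs_le:
  assumes "finite F"
  shows "card (adjacent_pairs F) \<le> card F choose 2"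
  using card_mono[OF finite_2_subsets[OF assms] adjacent_pairs_subset_2_subsets] n_subsets[OF assms]
  by simp

lemma card_adjacent_pairs_eq_iff:
  assumes "finite F"
  shows "card (adjacent_pairs F) = card F choose 2 \<longleftrightarrow> pairwise (\<lambda>e f. e \<inter> f \<noteq> {}) F"
proof
  assume "card (adjacent_pairs F) = card F choose 2"
  then have all: "adjacent_pairs F = {A. A \<subseteq> F \<and> card A = 2}"
    using card_subset_eq[OF finite_2_subsets[OF assms] adjacent_pairs_subset_2_subsets] n_subsets[OF assms]
    by simp
  show "pairwise (\<lambda>e f. e \<inter> f \<noteq> {}) F"
  proof (rule pairwiseI)
    fix e f assume "e \<in> F" "f \<in> F" "e \<noteq> f"
    then have "{e, f} \<in> adjacent_pairs F"
      unfolding all by auto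
    with \<open>e \<noteq> f\<close> show "e \<inter> f \<noteq> {}"
      unfolding adjacent_pairs_def by (auto simp: pairwise_insert)
  qed
next
  assume "pairwise (\<lambda>e f. e \<inter> f \<noteq> {}) F"
  then have "adjacent_pairs F = {A. A \<subseteq> F \<and> card A = 2}"
    unfolding adjacent_pairs_def by (auto intro: pairwise_subset)
  then show "card (adjacent_pairs F) = card F choose 2"
    using n_subsets[OF assms] by simp
qed

lemma simple_graph_finite_edges:
  assumes "simple_graph V E"
  shows "finite E"
proof (rule finite_subset)
  show "E \<subseteq> Pow V"
    using assms unfolding simple_graph_def by auto
  show "finite (Pow V)"
    using assms unfolding simple_graph_def by simp
qed

lemma simple_graph_card_edge: "simple_graph V E \<Longrightarrow> e \<in> E \<Longrightarrow> card e = 2"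
  unfolding simple_graph_def by auto

lemma simple_graph_finite_edge: "simple_graph V E \<Longrightarrow> e \<in> E \<Longrightarrow> finite e"
  by (rule card_ge_0_finite) (simp add: simple_graph_card_edge)

lemma simple_graph_edge_through:
  assumes "simple_graph V E" "e \<in> E" "u \<in> e"
  obtains x where "x \<noteq> u" "e = {u, x}"
  using card_2_elim_member[OF simple_graph_card_edge[OF assms(1,2)] assms(3)] .

lemma simple_graph_edge_eq:
  assumes "simple_graph V E" "e \<in> E" "u \<in> e" "v \<in> e" "u \<noteq> v"
  shows "e = {u, v}"
  by (rule simple_graph_edge_through[OF assms(1-3)]) (use assms(4,5) in auto)

lemma self_notin_neighbours: "simple_graph V E \<Longrightarrow> u \<notin> neighbours E u"
  unfolding neighbours_def using simple_graph_card_edge by fastforce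

lemma neighbours_subset: "simple_graph V E \<Longrightarrow> neighbours E u \<subseteq> V"
  unfolding neighbours_def simple_graph_def by (auto simp: doubleton_eq_iff)

lemma edges_through_eq_image_neighbours:
  assumes "simple_graph V E"
  shows "{e \<in> E. u \<in> e} = (\<lambda>x. {u, x}) ` neighbours E u"
  unfolding neighbours_def using simple_graph_edge_through[OF assms] by blast

lemma card_neighbours:
  assumes "simple_graph V E"
  shows "card (neighbours E u) = degree E u"
proof -
  have "inj_on (\<lambda>x. {u, x}) (neighbours E u)"
    using self_notin_neighbours[OF assms] by (auto intro!: inj_onI simp: doubleton_eq_iff)
  then show ?thesis
    unfolding degree_def edges_through_eq_image_neighbours[OF assms] by (simp add: card_image)
qed

lemma degree_add_card_avoiding:
  assumes "finite E"
  shows "degree E u + card {e \<in> E. u \<notin> e} = card E"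
  unfolding degree_def using assms by (subst card_Un_disjoint[symmetric]) (auto intro: arg_cong[where f = card])

lemma degree_le_Suc_card_avoiding:
  assumes "simple_graph V E" "x \<noteq> u"
  shows "degree E x \<le> Suc (card {e \<in> E. u \<notin> e})"
proof -
  have "{e \<in> E. x \<in> e} \<subseteq> insert {u, x} {e \<in> E. u \<notin> e}"
    using simple_graph_edge_eq[OF assms(1)] assms(2) by blast
  then have "degree E x \<le> card (insert {u, x} {e \<in> E. u \<notin> e})"
    unfolding degree_def using simple_graph_finite_edges[OF assms(1)] by (intro card_mono) auto
  also have "\<dots> \<le> Suc (card {e \<in> E. u \<notin> e})"
    using simple_graph_finite_edges[OF assms(1)] by (simp add: card_insert_if)
  finally show ?thesis .
qed

lemma max_degree_attained:
  assumes "simple_graph V E" "E \<noteq> {}"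
  obtains u where "u \<in> V" "degree E u = max_degree V E"
proof -
  have "V \<noteq> {}" "finite V"
    using assms unfolding simple_graph_def by auto
  then show ?thesis
    using that Max_in[of "degree E ` V"] unfolding max_degree_def by fastforce
qed

lemma adjacent_pairs_filter_iff:
  "A \<in> adjacent_pairs {e \<in> E. P e} \<longleftrightarrow> A \<in> adjacent_pairs E \<and> (\<forall>e\<in>A. P e)"
  unfolding adjacent_pairs_def by blast

lemma card_cross_pairs:
  assumes "finite F" "\<forall>f\<in>F. finite f \<and> u \<notin> f"
  shows "card ((\<lambda>(f, x). {{u, x}, f}) ` (SIGMA f:F. f \<inter> X)) = (\<Sum>f\<in>F. card (f \<inter> X))"
proof -
  have "inj_on (\<lambda>(f, x). {{u, x}, f}) (SIGMA f:F. f \<inter> X)"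
  proof (rule inj_onI, clarify)
    fix f x f' x'
    assume "f \<in> F" "x \<in> f" "f' \<in> F" "x' \<in> f'" "{{u, x}, f} = {{u, x'}, f'}"
    moreover from this have "u \<notin> f" "u \<notin> f'"
      using assms(2) by auto
    ultimately have "{u, x} = {u, x'}" "f = f'" "x \<noteq> u"
      by (auto simp: doubleton_eq_iff)
    then show "f = f' \<and> x = x'"
      by (auto simp: doubleton_eq_iff)
  qed
  then show ?thesis
    using assms by (simp add: card_image)
qed

lemma adjacent_pair_in_cross_pairs:
  assumes sg: "simple_graph V E" and "s \<in> E" "u \<in> s" "f \<in> E" "u \<notin> f" "s \<inter> f \<noteq> {}"
  shows "{s, f} \<in> (\<lambda>(f, x). {{u, x}, f}) ` (SIGMA f:{e \<in> E. u \<notin> e}. f \<inter> neighbours E u)"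
proof -
  obtain x where "x \<noteq> u" "s = {u, x}"
    using simple_graph_edge_through[OF sg \<open>s \<in> E\<close> \<open>u \<in> s\<close>] .
  with assms(2-6) have "x \<in> f \<inter> neighbours E u" "{s, f} = (\<lambda>(f, x). {{u, x}, f}) (f, x)"
    unfolding neighbours_def by auto
  with assms(4,5) show ?thesis
    by blast
qed

lemma adjacent_pairs_vertex_split:
  assumes sg: "simple_graph V E"
  shows "adjacent_pairs E = adjacent_pairs {e \<in> E. u \<in> e} \<union> adjacent_pairs {e \<in> E. u \<notin> e}
    \<union> (\<lambda>(f, x). {{u, x}, f}) ` (SIGMA f:{e \<in> E. u \<notin> e}. f \<inter> neighbours E u)"
    (is "_ = ?S \<union> ?F \<union> ?C")
proof (intro equalityI subsetI)
  fix A assume "A \<in> adjacent_pairs E"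
  then obtain e1 e2 where A: "A = {e1, e2}" "e1 \<in> E" "e2 \<in> E" "e1 \<inter> e2 \<noteq> {}"
    by (rule adjacent_pairsE)
  consider "u \<in> e1" "u \<in> e2" | "u \<notin> e1" "u \<notin> e2" | "u \<in> e1" "u \<notin> e2" | "u \<notin> e1" "u \<in> e2"
    by blast
  then show "A \<in> ?S \<union> ?F \<union> ?C"
  proof cases
    case 1
    with \<open>A \<in> adjacent_pairs E\<close> show ?thesis
      unfolding A(1) by (simp add: adjacent_pairs_filter_iff)
  next
    case 2
    with \<open>A \<in> adjacent_pairs E\<close> show ?thesis
      unfolding A(1) by (simp add: adjacent_pairs_filter_iff)
  next
    case 3
    then show ?thesis
      using adjacent_pair_in_cross_pairs[OF sg, of e1 u e2] A by blast
  next
    case 4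
    then show ?thesis
      using adjacent_pair_in_cross_pairs[OF sg, of e2 u e1] A by (simp add: insert_commute Int_commute)
  qed
next
  fix A assume "A \<in> ?S \<union> ?F \<union> ?C"
  then consider "A \<in> ?S" | "A \<in> ?F" | f x where "f \<in> E" "u \<notin> f" "x \<in> f" "{u, x} \<in> E" "A = {{u, x}, f}"
    unfolding neighbours_def by blast
  then show "A \<in> adjacent_pairs E"
  proof cases
    case 3
    then show ?thesis
      using adjacent_pairsI[of "{u, x}" E f] by auto
  qed (simp_all add: adjacent_pairs_filter_iff)
qed

lemma line_graph_edges_vertex_split:
  assumes sg: "simple_graph V E"
  shows "line_graph_edges E = (degree E u choose 2) + line_graph_edges {e \<in> E. u \<notin> e}
    + (\<Sum>f\<in>{e \<in> E. u \<notin> e}. card (f \<inter> neighbours E u))"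
proof -
  define S where "S = {e \<in> E. u \<in> e}"
  define F where "F = {e \<in> E. u \<notin> e}"
  define C where "C = (\<lambda>(f, x). {{u, x}, f}) ` (SIGMA f:F. f \<inter> neighbours E u)"
  have fin: "finite S" "finite F" "finite (adjacent_pairs E)"
    using simple_graph_finite_edges[OF sg] finite_2_subsets adjacent_pairs_subset_2_subsets
    unfolding S_def F_def by (auto intro: finite_subset)
  have split: "adjacent_pairs E = adjacent_pairs S \<union> adjacent_pairs F \<union> C"
    using adjacent_pairs_vertex_split[OF sg] unfolding S_def F_def C_def .
  have nonempty_subset: "A \<subseteq> X \<and> A \<noteq> {}" if "A \<in> adjacent_pairs X" for A X
    using that unfolding adjacent_pairs_def by fastforce
  have "adjacent_pairs S \<inter> adjacent_pairs F = {}"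
    using nonempty_subset unfolding S_def F_def by blast
  moreover have "(adjacent_pairs S \<union> adjacent_pairs F) \<inter> C = {}"
  proof -
    have "\<not> A \<subseteq> S" "\<not> A \<subseteq> F" if "A \<in> C" for A
      using that unfolding C_def S_def F_def by auto
    then show ?thesis
      using nonempty_subset by blast
  qed
  ultimately have "card (adjacent_pairs E) = card (adjacent_pairs S) + card (adjacent_pairs F) + card C"
    using fin(3) unfolding split by (simp add: card_Un_disjoint)
  moreover have "card (adjacent_pairs S) = card S choose 2"
    using card_adjacent_pairs_eq_iff[OF fin(1)] unfolding S_def pairwise_def by blast
  moreover have "card C = (\<Sum>f\<in>F. card (f \<inter> neighbours E u))"
    unfolding C_def using fin(2) simple_graph_finite_edge[OF sg]
    by (intro card_cross_pairs) (auto simp: F_def)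
  ultimately show ?thesis
    unfolding line_graph_edges_eq_card_adjacent_pairs degree_def S_def F_def by simp
qed

lemma sum_card_Int_eq_sum_card_iff:
  assumes "finite F" "\<forall>f\<in>F. finite f"
  shows "(\<Sum>f\<in>F. card (f \<inter> X)) = (\<Sum>f\<in>F. card f) \<longleftrightarrow> (\<forall>f\<in>F. f \<subseteq> X)"
proof
  assume eq: "(\<Sum>f\<in>F. card (f \<inter> X)) = (\<Sum>f\<in>F. card f)"
  show "\<forall>f\<in>F. f \<subseteq> X"
  proof
    fix f assume "f \<in> F"
    then have "card (f \<inter> X) = card f"
      using sum_mono_inv[OF eq _ \<open>f \<in> F\<close> assms(1)] assms(2) by (simp add: card_mono)
    with \<open>f \<in> F\<close> assms(2) have "f \<inter> X = f"
      by (intro card_subset_eq) auto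
    then show "f \<subseteq> X"
      by blast
  qed
qed (simp add: Int_absorb2)

lemma line_graph_edges_bound:
  fixes u :: 'a
  assumes sg: "simple_graph V E"
  defines "F \<equiv> {e \<in> E. u \<notin> e}"
  shows "line_graph_edges E \<le> (degree E u choose 2) + (card F choose 2) + 2 * card F"
    and "line_graph_edges E = (degree E u choose 2) + (card F choose 2) + 2 * card F \<longleftrightarrow>
      pairwise (\<lambda>e f. e \<inter> f \<noteq> {}) F \<and> (\<forall>f\<in>F. f \<subseteq> neighbours E u)"
proof -
  define X where "X = (\<Sum>f\<in>F. card (f \<inter> neighbours E u))"
  have split: "line_graph_edges E = (degree E u choose 2) + line_graph_edges F + X"
    unfolding F_def X_def by (rule line_graph_edges_vertex_split[OF sg])
  have fin: "finite F" "\<forall>f\<in>F. finite f"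
    using simple_graph_finite_edges[OF sg] simple_graph_finite_edge[OF sg] unfolding F_def by auto
  have pairs: "line_graph_edges F \<le> card F choose 2"
    "line_graph_edges F = card F choose 2 \<longleftrightarrow> pairwise (\<lambda>e f. e \<inter> f \<noteq> {}) F"
    unfolding line_graph_edges_eq_card_adjacent_pairs
    using card_adjacent_pairs_le card_adjacent_pairs_eq_iff fin(1) by blast+
  have "(\<Sum>f\<in>F. card f) = 2 * card F"
    using simple_graph_card_edge[OF sg] unfolding F_def by simp
  moreover have "X \<le> (\<Sum>f\<in>F. card f)"
    unfolding X_def using fin(2) by (intro sum_mono card_mono) auto
  ultimately have cross: "X \<le> 2 * card F" "X = 2 * card F \<longleftrightarrow> (\<forall>f\<in>F. f \<subseteq> neighbours E u)"
    using sum_card_Int_eq_sum_card_iff[OF fin] unfolding X_def by auto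
  show "line_graph_edges E \<le> (degree E u choose 2) + (card F choose 2) + 2 * card F"
    using split pairs(1) cross(1) by linarith
  show "line_graph_edges E = (degree E u choose 2) + (card F choose 2) + 2 * card F \<longleftrightarrow>
      pairwise (\<lambda>e f. e \<inter> f \<noteq> {}) F \<and> (\<forall>f\<in>F. f \<subseteq> neighbours E u)"
    using split pairs cross by linarith
qed

lemma line_graph_edges_le_max_degree:
  assumes sg: "simple_graph V E" and "E \<noteq> {}"
  defines "m \<equiv> card E - max_degree V E"
  shows "line_graph_edges E \<le> (max_degree V E choose 2) + (m choose 2) + 2 * m"
proof -
  obtain u where "degree E u = max_degree V E"
    using max_degree_attained[OF assms(1,2)] by metis
  moreover from this have "card {e \<in> E. u \<notin> e} = m"
    using degree_add_card_avoiding[OF simple_graph_finite_edges[OF sg], of u] unfolding m_def by simp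
  ultimately show ?thesis
    using line_graph_edges_bound(1)[OF sg, of u] by simp
qed

definition Q_graph :: "nat \<Rightarrow> nat \<Rightarrow> nat set set" where
  "Q_graph N t = (\<lambda>x. {0, x}) ` {1..N - t} \<union> (\<lambda>j. {1, j}) ` {2..t + 1}"

lemma Q_graph_edges_through_0: "{e \<in> Q_graph N t. 0 \<in> e} = (\<lambda>x. {0, x}) ` {1..N - t}"
  unfolding Q_graph_def by auto

lemma Q_graph_edges_avoiding_0: "{e \<in> Q_graph N t. 0 \<notin> e} = (\<lambda>j. {1, j}) ` {2..t + 1}"
  unfolding Q_graph_def by auto

lemma degree_Q_graph_0: "degree (Q_graph N t) 0 = N - t"
proof -
  have "inj_on (\<lambda>x. {0::nat, x}) {1..N - t}"
    by (rule inj_onI) (auto simp: doubleton_eq_iff)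
  then show ?thesis
    unfolding degree_def Q_graph_edges_through_0 by (simp add: card_image)
qed

lemma card_Q_graph_edges_avoiding_0: "card {e \<in> Q_graph N t. 0 \<notin> e} = t"
proof -
  have "inj_on (\<lambda>j. {1::nat, j}) {2..t + 1}"
    by (rule inj_onI) (auto simp: doubleton_eq_iff)
  then show ?thesis
    unfolding Q_graph_edges_avoiding_0 by (simp add: card_image)
qed

lemma simple_graph_Q_graph:
  assumes "2 * t < N"
  shows "simple_graph {0..N - t} (Q_graph N t)"
  unfolding simple_graph_def
proof (intro conjI ballI)
  fix e assume "e \<in> Q_graph N t"
  then obtain x y where "e = {x, y}" "x \<noteq> y" "x \<le> N - t" "y \<le> N - t"
    using assms unfolding Q_graph_def by fastforce
  then show "\<exists>x y. x \<noteq> y \<and> x \<in> {0..N - t} \<and> y \<in> {0..N - t} \<and> e = {x, y}"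
    by auto
qed simp

lemma card_Q_graph:
  assumes "2 * t < N"
  shows "card (Q_graph N t) = N"
  using degree_add_card_avoiding[of "Q_graph N t" 0] simple_graph_finite_edges[OF simple_graph_Q_graph[OF assms]]
  using degree_Q_graph_0 card_Q_graph_edges_avoiding_0 assms by simp

lemma max_degree_Q_graph:
  assumes "2 * t < N"
  shows "max_degree {0..N - t} (Q_graph N t) = N - t"
  unfolding max_degree_def
proof (rule Max_eqI)
  fix d assume "d \<in> degree (Q_graph N t) ` {0..N - t}"
  then obtain x where "d = degree (Q_graph N t) x"
    by blast
  moreover have "degree (Q_graph N t) x \<le> Suc t" if "x \<noteq> 0"
    using degree_le_Suc_card_avoiding[OF simple_graph_Q_graph[OF assms] that]
    by (simp add: card_Q_graph_edges_avoiding_0)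
  ultimately show "d \<le> N - t"
    using degree_Q_graph_0 assms by (cases "x = 0") auto
next
  show "N - t \<in> degree (Q_graph N t) ` {0..N - t}"
    using degree_Q_graph_0 by (metis atLeastAtMost_iff image_eqI le0 order_refl)
qed simp

lemma min_degree_Q_graph:
  assumes "2 * t < N"
  shows "min_degree {0..N - t} (Q_graph N t) \<ge> 1"
proof -
  have "{e \<in> Q_graph N t. x \<in> e} \<noteq> {}" if "x \<le> N - t" for x
  proof -
    have "{0, max x 1} \<in> Q_graph N t"
      using that assms unfolding Q_graph_def by auto
    then show ?thesis
      by (cases "x = 0") auto
  qed
  then have "degree (Q_graph N t) x \<noteq> 0" if "x \<le> N - t" for x
    using that simple_graph_finite_edges[OF simple_graph_Q_graph[OF assms]] by (simp add: degree_def)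
  then show ?thesis
    unfolding min_degree_def by (subst Min_ge_iff) (auto simp: Suc_le_eq)
qed

lemma line_graph_edges_Q_graph:
  assumes "2 * t < N"
  shows "line_graph_edges (Q_graph N t) = ((N - t) choose 2) + (t choose 2) + 2 * t"
proof -
  have "pairwise (\<lambda>e f. e \<inter> f \<noteq> {}) {e \<in> Q_graph N t. 0 \<notin> e}"
    unfolding Q_graph_edges_avoiding_0 by (auto simp: pairwise_def)
  moreover have "\<forall>f\<in>{e \<in> Q_graph N t. 0 \<notin> e}. f \<subseteq> neighbours (Q_graph N t) 0"
    using assms unfolding Q_graph_edges_avoiding_0 neighbours_def Q_graph_def by auto
  ultimately show ?thesis
    using line_graph_edges_bound(2)[OF simple_graph_Q_graph[OF assms], of 0]
    by (simp add: degree_Q_graph_0 card_Q_graph_edges_avoiding_0)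
qed

lemma f_max_eq:
  assumes "2 * t < N"
  shows "f_max N (N - t) = ((N - t) choose 2) + (t choose 2) + 2 * t"
proof -
  let ?B = "((N - t) choose 2) + (t choose 2) + 2 * t"
  let ?M = "{line_graph_edges E | (V :: nat set) E.
      simple_graph V E \<and> card E = N \<and> max_degree V E = N - t \<and> min_degree V E \<ge> 1}"
  have le: "line_graph_edges E \<le> ?B"
    if "simple_graph V E" "card E = N" "max_degree V E = N - t" for V :: "nat set" and E
  proof -
    have "E \<noteq> {}" and "card E - max_degree V E = t"
      using that assms by auto
    then show ?thesis
      using line_graph_edges_le_max_degree[OF that(1)] that(3) by simp
  qed
  have "finite ?M"
    by (rule finite_subset[of _ "{..?B}"]) (auto dest: le)
  moreover have "m \<le> ?B" if "m \<in> ?M" for m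
    using that le by blast
  moreover have "?B = line_graph_edges (Q_graph N t) \<and> simple_graph {0..N - t} (Q_graph N t) \<and>
      card (Q_graph N t) = N \<and> max_degree {0..N - t} (Q_graph N t) = N - t \<and>
      min_degree {0..N - t} (Q_graph N t) \<ge> 1"
    using simple_graph_Q_graph card_Q_graph max_degree_Q_graph min_degree_Q_graph
      line_graph_edges_Q_graph assms by simp
  then have "?B \<in> ?M"
    by blast
  ultimately show ?thesis
    unfolding f_max_def by (rule Max_eqI)
qed

lemma pairwise_intersecting_2_sets_triangle:
  assumes card2: "\<forall>f\<in>F. card f = 2" and meet: "pairwise (\<lambda>e f. e \<inter> f \<noteq> {}) F"
    and no_star: "\<not> (\<exists>v. \<forall>f\<in>F. v \<in> f)"
  obtains a b c where "a \<noteq> b" "b \<noteq> c" "a \<noteq> c" "F = {{a, b}, {b, c}, {a, c}}"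
proof -
  have meets: "e \<inter> f \<noteq> {}" if "e \<in> F" "f \<in> F" for e f
    using that meet card2 unfolding pairwise_def by (cases "e = f") auto
  obtain f where "f \<in> F"
    using no_star by blast
  then obtain a b where ab: "a \<noteq> b" "f = {a, b}"
    using card2 card_2_iff by metis
  obtain g where "g \<in> F" "a \<notin> g"
    using no_star by blast
  then have "b \<in> g"
    using meets[OF \<open>f \<in> F\<close>] ab by blast
  then obtain c where "c \<noteq> b" "g = {b, c}"
    using card2 \<open>g \<in> F\<close> by (blast elim: card_2_elim_member)
  with \<open>a \<notin> g\<close> have bc: "b \<noteq> c" "a \<noteq> c" "g = {b, c}"
    by auto
  obtain h where "h \<in> F" "b \<notin> h"
    using no_star by blast
  then have "a \<in> h" "c \<in> h"
    using meets[OF \<open>f \<in> F\<close>] meets[OF \<open>g \<in> F\<close>] ab bc by blast+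
  then have ac: "h = {a, c}"
    using card2 \<open>h \<in> F\<close> bc by (simp add: card_2_eq_doubleton)
  have "k \<in> {f, g, h}" if "k \<in> F" for k
  proof -
    have "k \<inter> {a, b} \<noteq> {}" "k \<inter> {b, c} \<noteq> {}" "k \<inter> {a, c} \<noteq> {}"
      using meets[OF that] \<open>f \<in> F\<close> \<open>g \<in> F\<close> \<open>h \<in> F\<close> ab bc ac by auto
    then consider "a \<in> k" "b \<in> k" | "b \<in> k" "c \<in> k" | "a \<in> k" "c \<in> k"
      by blast
    then show ?thesis
      using card2 that ab bc ac by cases (simp_all add: card_2_eq_doubleton)
  qed
  with \<open>f \<in> F\<close> \<open>g \<in> F\<close> \<open>h \<in> F\<close> have "F = {{a, b}, {b, c}, {a, c}}"
    using ab bc ac by blast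
  with ab bc show thesis
    using that by blast
qed

lemma edges_avoiding_through_common_vertex:
  assumes sg: "simple_graph V E" and "{e \<in> E. u \<notin> e} \<noteq> {}"
    and common: "\<forall>f\<in>{e \<in> E. u \<notin> e}. v \<in> f \<and> f \<subseteq> neighbours E u"
  shows "{u, v} \<in> E \<and> u \<noteq> v \<and> degree E v = card {e \<in> E. u \<notin> e} + 1 \<and>
    (\<forall>w. {v, w} \<in> E \<and> w \<noteq> u \<longrightarrow> {u, w} \<in> E)"
proof -
  have "v \<in> neighbours E u"
    using assms(2) common by blast
  then have uv: "{u, v} \<in> E" "u \<noteq> v"
    using self_notin_neighbours[OF sg] unfolding neighbours_def by auto
  have "{e \<in> E. v \<in> e} = insert {u, v} {e \<in> E. u \<notin> e}"
  proof (intro equalityI subsetI)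
    fix e assume "e \<in> {e \<in> E. v \<in> e}"
    then show "e \<in> insert {u, v} {e \<in> E. u \<notin> e}"
      using simple_graph_edge_eq[OF sg, of e u v] uv(2) by blast
  qed (use common uv in auto)
  then have "degree E v = card {e \<in> E. u \<notin> e} + 1"
    unfolding degree_def using simple_graph_finite_edges[OF sg] by simp
  moreover have "{u, w} \<in> E" if "{v, w} \<in> E" "w \<noteq> u" for w
  proof -
    have "{v, w} \<in> {e \<in> E. u \<notin> e}"
      using that uv(2) by simp
    then have "w \<in> neighbours E u"
      using common by auto
    then show ?thesis
      unfolding neighbours_def by simp
  qed
  ultimately show ?thesis
    using uv by blast
qed

lemma edges_eq_star_Un_triangle:
  assumes sg: "simple_graph V E" and tri: "{e \<in> E. u \<notin> e} = {{a, b}, {b, c}, {a, c}}"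
    and inside: "\<forall>f\<in>{e \<in> E. u \<notin> e}. f \<subseteq> neighbours E u"
  shows "\<exists>L. u \<notin> L \<and> finite L \<and> card L = degree E u \<and> a \<in> L \<and> b \<in> L \<and> c \<in> L \<and>
    E = (\<lambda>x. {u, x}) ` L \<union> {{a, b}, {b, c}, {a, c}}"
proof (intro exI conjI)
  show "u \<notin> neighbours E u"
    by (rule self_notin_neighbours[OF sg])
  show "finite (neighbours E u)"
    using neighbours_subset[OF sg] sg unfolding simple_graph_def by (blast intro: finite_subset)
  show "card (neighbours E u) = degree E u"
    by (rule card_neighbours[OF sg])
  show "a \<in> neighbours E u" "b \<in> neighbours E u" "c \<in> neighbours E u"
    using inside unfolding tri by auto
  have "E = {e \<in> E. u \<in> e} \<union> {e \<in> E. u \<notin> e}"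
    by blast
  then show "E = (\<lambda>x. {u, x}) ` neighbours E u \<union> {{a, b}, {b, c}, {a, c}}"
    unfolding edges_through_eq_image_neighbours[OF sg] tri .
qed

lemma extremal_edges_avoiding_structure:
  fixes z :: 'a
  assumes sg: "simple_graph V E" and nonempty: "{e \<in> E. z \<notin> e} \<noteq> {}"
    and meet: "pairwise (\<lambda>e f. e \<inter> f \<noteq> {}) {e \<in> E. z \<notin> e}"
    and inside: "\<forall>f\<in>{e \<in> E. z \<notin> e}. f \<subseteq> neighbours E z"
  defines "m \<equiv> card {e \<in> E. z \<notin> e}"
  shows "(\<exists>u v. {u, v} \<in> E \<and> u \<noteq> v \<and> degree E u = card E - m \<and> degree E v = m + 1 \<and>
        (\<forall>w. {v, w} \<in> E \<and> w \<noteq> u \<longrightarrow> {u, w} \<in> E))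
    \<or> (m = 3 \<and> (\<exists>u L a b c. u \<notin> L \<and> finite L \<and> card L = card E - 3 \<and>
        a \<in> L \<and> b \<in> L \<and> c \<in> L \<and> a \<noteq> b \<and> b \<noteq> c \<and> a \<noteq> c \<and>
        E = (\<lambda>x. {u, x}) ` L \<union> {{a, b}, {b, c}, {a, c}}))"
proof -
  have degree_z: "degree E z = card E - m"
    using degree_add_card_avoiding[OF simple_graph_finite_edges[OF sg], of z] unfolding m_def by simp
  show ?thesis
  proof (cases "\<exists>v. \<forall>f\<in>{e \<in> E. z \<notin> e}. v \<in> f")
    case True
    then obtain v where "\<forall>f\<in>{e \<in> E. z \<notin> e}. v \<in> f"
      by blast
    with inside have "\<forall>f\<in>{e \<in> E. z \<notin> e}. v \<in> f \<and> f \<subseteq> neighbours E z"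
      by blast
    from edges_avoiding_through_common_vertex[OF sg nonempty this] show ?thesis
      using degree_z unfolding m_def by blast
  next
    case False
    have "\<forall>f\<in>{e \<in> E. z \<notin> e}. card f = 2"
      using simple_graph_card_edge[OF sg] by blast
    then obtain a b c
      where abc: "a \<noteq> b" "b \<noteq> c" "a \<noteq> c" "{e \<in> E. z \<notin> e} = {{a, b}, {b, c}, {a, c}}"
      using meet False by (rule pairwise_intersecting_2_sets_triangle)
    then have "m = 3"
      unfolding m_def by (simp add: doubleton_eq_iff)
    obtain L where L: "z \<notin> L" "finite L" "card L = degree E z" "a \<in> L" "b \<in> L" "c \<in> L"
        "E = (\<lambda>x. {z, x}) ` L \<union> {{a, b}, {b, c}, {a, c}}"
      using edges_eq_star_Un_triangle[OF sg abc(4) inside] by (elim exE conjE)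
    have "card L = card E - 3"
      using L(3) degree_z \<open>m = 3\<close> by simp
    with L abc(1-3) have "z \<notin> L \<and> finite L \<and> card L = card E - 3 \<and> a \<in> L \<and> b \<in> L \<and> c \<in> L \<and>
        a \<noteq> b \<and> b \<noteq> c \<and> a \<noteq> c \<and> E = (\<lambda>x. {z, x}) ` L \<union> {{a, b}, {b, c}, {a, c}}"
      by (intro conjI)
    then have "\<exists>u L a b c. u \<notin> L \<and> finite L \<and> card L = card E - 3 \<and> a \<in> L \<and> b \<in> L \<and> c \<in> L \<and>
        a \<noteq> b \<and> b \<noteq> c \<and> a \<noteq> c \<and> E = (\<lambda>x. {u, x}) ` L \<union> {{a, b}, {b, c}, {a, c}}"
      by (intro exI)
    with \<open>m = 3\<close> show ?thesis
      by (intro disjI2 conjI)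
  qed
qed

theorem mainTheorem13:
  fixes V :: "'a set" and E :: "'a set set" and N t :: nat
  assumes "t \<ge> 1" and "N \<ge> 2 * t + 1"
    and "simple_graph V E"
    and "\<forall>v\<in>V. \<exists>e\<in>E. v \<in> e"
    and "card E = N"
    and "max_degree V E = N - t"
    and "real (N - t) > real N / 2"
    and "line_graph_edges E = f_max N (N - t)"
  shows "f_max N (N - t) = ((N - t) choose 2) + ((t + 2) choose 2) - 1 \<and>
    ((\<exists>u v. {u, v} \<in> E \<and> u \<noteq> v \<and> degree E u = N - t \<and> degree E v = t + 1 \<and>
        (\<forall>w. {v, w} \<in> E \<and> w \<noteq> u \<longrightarrow> {u, w} \<in> E))
     \<or> (t = 3 \<and> (\<exists>u L a b c. u \<notin> L \<and> finite L \<and> card L = N - 3 \<and> a \<in> L \<and> b \<in> L \<and> c \<in> L \<and>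
          a \<noteq> b \<and> b \<noteq> c \<and> a \<noteq> c \<and>
          E = (\<lambda>x. {u, x}) ` L \<union> {{a, b}, {b, c}, {a, c}})))"
proof -
  note sg = assms(3)
  have "(t + 2) choose 2 = (t choose 2) + 2 * t + 1"
    by (simp add: numeral_2_eq_2)
  then have f_max_value: "f_max N (N - t) = ((N - t) choose 2) + (t choose 2) + 2 * t"
    and closed_form: "f_max N (N - t) = ((N - t) choose 2) + ((t + 2) choose 2) - 1"
    using f_max_eq assms(2) by simp_all
  have "E \<noteq> {}"
    using assms(2,5) by auto
  then obtain u where u: "degree E u = N - t"
    using max_degree_attained[OF sg] assms(6) by metis
  have card_avoiding: "card {e \<in> E. u \<notin> e} = t"
    using degree_add_card_avoiding[OF simple_graph_finite_edges[OF sg], of u] u assms(2,5) by simp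
  then have "line_graph_edges E =
      (degree E u choose 2) + (card {e \<in> E. u \<notin> e} choose 2) + 2 * card {e \<in> E. u \<notin> e}"
    using assms(8) f_max_value u by simp
  then have meet: "pairwise (\<lambda>e f. e \<inter> f \<noteq> {}) {e \<in> E. u \<notin> e}"
    and inside: "\<forall>f\<in>{e \<in> E. u \<notin> e}. f \<subseteq> neighbours E u"
    using line_graph_edges_bound(2)[OF sg, of u] by simp_all
  have nonempty: "{e \<in> E. u \<notin> e} \<noteq> {}"
    using card_avoiding assms(1) by (metis card.empty not_one_le_zero)
  show ?thesis
    using extremal_edges_avoiding_structure[OF sg nonempty meet inside, unfolded card_avoiding assms(5)]
    by (rule conjI[OF closed_form])
qed

end
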